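(* For every $n\in\mathbb{N}$ let $\sigma=\sigma_n$ be a uniformly distributed random permutation in $\mathcal{S}_n$, and let $$X_n=\frac{1}{\sqrt{n}}\operatorname{Re}\Big[\frac{1}{n}\sum_{k=1}^n\sigma(k)e^{2\pi i k/n}\Big]=\sum_{j=1}^n\frac{\sigma(j)}{n^{3/2}}\cos\Big(\frac{2\pi j}{n}\Big).$$ Then for every $m\in\mathbb{N}$, $$\lim_{n\to\infty}\mathbb{E}\big[X_n^{2m}\big]=\frac{(2m)!}{m!}\,\frac{1}{48^m}\qquad\text{and}\qquad \lim_{n\to\infty}\mathbb{E}\big[X_n^{2m-1}\big]=0.$$
   Context: $\mathbb{E}[X_n^k]=\frac{1}{n!}\sum_{\sigma\in\mathcal{S}_n}X_n(\sigma)^k$. *)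

theory Defs
  imports "HOL-Analysis.Analysis" "HOL-Combinatorics.Permutations"
begin

definition Xn :: "nat \<Rightarrow> (nat \<Rightarrow> nat) \<Rightarrow> real" where
  "Xn n \<sigma> = (\<Sum>j=1..n. real (\<sigma> j) / (real n powr (3/2)) * cos (2 * pi * real j / real n))"

definition moment :: "nat \<Rightarrow> nat \<Rightarrow> real" where
  "moment n k = (1 / fact n) * (\<Sum>\<sigma>\<in>{\<sigma>. \<sigma> permutes {1..n}}. Xn n \<sigma> ^ k)"

end

(* Write X_n = c * sum_j a_j b_(sigma j) with centred weights a_j = cos(2 pi j/n), b_l = l - (n+1)/2
   and c = n^(-3/2); this is a linear rank statistic.  Replacing sigma by sigma o (i j) changes X_n by
   D_ij = c (a_i - a_j)(b_(sigma j) - b_(sigma i)), which changes sign under that replacement, so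
   averaging over sigma, i, j gives the Stein identity
     4n E[g X_n] = E[sum_(i,j) D_ij (g(sigma o (i j)) - g(sigma))].
   For g = X_n^(2m-1), expanding to first order in D and using
   sum_(i,j) D_ij^2 = 2n Y_n + (n^2-1)/(6n) + 4 X_n^2 yields
     E[X_n^(2m)] = (2m-1) (E[X_n^(2m-2)]/24 + E[X_n^(2m-2) Y_n]/2) + O(n^(-1/2)) (1 + E[X_n^(2m)]).
   The fluctuation Y_n of the conditional variance is again a linear rank statistic, and the same
   identity gives E[Y_n^2] = O(1/n), so the cross term vanishes.  By induction on m the even moments
   are bounded and converge to the moments (2m)!/(m! 48^m) of a centred Gaussian of variance 1/24.
   The odd moments vanish exactly because l -> n+1-l negates b. *)

theory Submission
  imports Defs "HOL-Real_Asymp.Real_Asymp"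
begin

lemma power_taylor_remainder_Suc:
  fixes x d :: real
  shows "(x + d) ^ Suc k - x ^ Suc k - real (Suc k) * x ^ k * d
       = (x + d) * ((x + d) ^ k - x ^ k - real k * x ^ (k - 1) * d) + real k * x ^ (k - 1) * d\<^sup>2"
  by (cases k) (simp_all add: algebra_simps power2_eq_square)

lemma abs_power_taylor_remainder_le:
  fixes x d :: real
  assumes "\<bar>d\<bar> \<le> 1"
  shows "\<bar>(x + d) ^ k - x ^ k - real k * x ^ (k - 1) * d\<bar> \<le> (real k)\<^sup>2 * d\<^sup>2 * (1 + \<bar>x\<bar>) ^ k"
proof (induction k)
  case 0
  then show ?case by simp
next
  case (Suc k)
  have "\<bar>x + d\<bar> \<le> 1 + \<bar>x\<bar>"
    using assms by linarith
  moreover have "\<bar>x\<bar> ^ (k - 1) \<le> (1 + \<bar>x\<bar>) ^ Suc k"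
    by (rule order_trans[OF power_mono power_increasing]) auto
  ultimately have bound:
    "\<bar>x + d\<bar> * \<bar>(x + d) ^ k - x ^ k - real k * x ^ (k - 1) * d\<bar> + real k * \<bar>x\<bar> ^ (k - 1) * d\<^sup>2
      \<le> (1 + \<bar>x\<bar>) * ((real k)\<^sup>2 * d\<^sup>2 * (1 + \<bar>x\<bar>) ^ k) + real k * (1 + \<bar>x\<bar>) ^ Suc k * d\<^sup>2"
    by (intro add_mono mult_mono Suc.IH mult_right_mono mult_left_mono) auto
  have "\<bar>(x + d) ^ Suc k - x ^ Suc k - real (Suc k) * x ^ k * d\<bar>
      \<le> \<bar>x + d\<bar> * \<bar>(x + d) ^ k - x ^ k - real k * x ^ (k - 1) * d\<bar> + real k * \<bar>x\<bar> ^ (k - 1) * d\<^sup>2"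
    unfolding power_taylor_remainder_Suc
    by (rule order_trans[OF abs_triangle_ineq]) (simp add: abs_mult power_abs)
  also note bound
  also have "(1 + \<bar>x\<bar>) * ((real k)\<^sup>2 * d\<^sup>2 * (1 + \<bar>x\<bar>) ^ k) + real k * (1 + \<bar>x\<bar>) ^ Suc k * d\<^sup>2
      = ((real k)\<^sup>2 + real k) * (d\<^sup>2 * (1 + \<bar>x\<bar>) ^ Suc k)"
    by (simp add: algebra_simps power2_eq_square)
  also have "\<dots> \<le> (real (Suc k))\<^sup>2 * (d\<^sup>2 * (1 + \<bar>x\<bar>) ^ Suc k)"
    by (intro mult_right_mono) (simp add: power2_eq_square algebra_simps, simp)
  finally show ?case
    by (simp add: mult.assoc)
qed

lemma one_plus_abs_power_le: "(1 + \<bar>x\<bar>) ^ k \<le> 2 ^ k * (1 + \<bar>x\<bar> ^ k)" for x :: real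
proof -
  have "(1 + \<bar>x\<bar>) ^ k \<le> (2 * max 1 \<bar>x\<bar>) ^ k"
    by (intro power_mono) auto
  also have "max 1 \<bar>x\<bar> ^ k \<le> 1 + \<bar>x\<bar> ^ k"
    by (cases "\<bar>x\<bar> \<le> 1") (auto simp: max_def)
  then have "(2 * max 1 \<bar>x\<bar>) ^ k \<le> 2 ^ k * (1 + \<bar>x\<bar> ^ k)"
    unfolding power_mult_distrib by (intro mult_left_mono) auto
  finally show ?thesis .
qed

lemma abs_power_le_one_plus_power:
  fixes x :: real
  assumes "k \<le> l"
  shows "\<bar>x\<bar> ^ k \<le> 1 + \<bar>x\<bar> ^ l"
proof (cases "\<bar>x\<bar> \<le> 1")
  case True
  then have "\<bar>x\<bar> ^ k \<le> 1"
    by (simp add: power_le_one)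
  then show ?thesis
    by (intro add_increasing2) auto
next
  case False
  then have "\<bar>x\<bar> ^ k \<le> \<bar>x\<bar> ^ l"
    using assms by (intro power_increasing) auto
  then show ?thesis by simp
qed

lemma odd_power_increment_bound:
  fixes x d \<delta> :: real
  assumes d: "\<bar>d\<bar> \<le> \<delta>" and \<delta>: "\<delta> \<le> 1" and m: "m \<ge> 1"
  shows "\<bar>d * ((x + d) ^ (2*m - 1) - x ^ (2*m - 1) - real (2*m - 1) * x ^ (2*m - 2) * d)\<bar>
    \<le> \<delta> ^ 3 * (real (2*m - 1) ^ 2 * 2 ^ (2*m)) * (1 + x ^ (2*m))"
proof -
  define k where "k = 2*m - 1"
  have k: "k - 1 = 2*m - 2" "Suc k = 2*m"
    using m by (auto simp: k_def)
  have d2: "d\<^sup>2 \<le> \<delta>\<^sup>2"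
    using power_mono[OF d abs_ge_zero, of 2] by simp
  have "\<bar>(x + d) ^ k - x ^ k - real k * x ^ (k - 1) * d\<bar> \<le> (real k)\<^sup>2 * d\<^sup>2 * (1 + \<bar>x\<bar>) ^ k"
    using d \<delta> by (intro abs_power_taylor_remainder_le) simp
  also have "\<dots> \<le> (real k)\<^sup>2 * \<delta>\<^sup>2 * (2 ^ k * (2 * (1 + x ^ (2*m))))"
  proof -
    have "\<bar>x\<bar> ^ k \<le> 1 + x ^ (2*m)"
      using abs_power_le_one_plus_power[of k "2*m" x] by (simp add: k_def power_even_abs)
    moreover have "0 \<le> x ^ (2*m)"
      by (simp add: zero_le_even_power)
    ultimately have "1 + \<bar>x\<bar> ^ k \<le> 2 * (1 + x ^ (2*m))"
      by argo
    then show ?thesis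
      using d2 by (intro mult_mono order_trans[OF one_plus_abs_power_le]) auto
  qed
  also have "\<dots> = \<delta>\<^sup>2 * (real k ^ 2 * 2 ^ (2*m)) * (1 + x ^ (2*m))"
    using k(2) by (simp flip: power_Suc add: algebra_simps)
  finally have "\<bar>d\<bar> * \<bar>(x + d) ^ k - x ^ k - real k * x ^ (k - 1) * d\<bar>
      \<le> \<delta> * (\<delta>\<^sup>2 * (real k ^ 2 * 2 ^ (2*m)) * (1 + x ^ (2*m)))"
    using d by (intro mult_mono) auto
  then show ?thesis
    unfolding k(1)[symmetric] k_def[symmetric] abs_mult
    by (simp add: power2_eq_square power3_eq_cube mult_ac)
qed

lemma abs_mult_le_weighted_sq:
  fixes x y s :: real
  assumes "s > 0"
  shows "\<bar>x * y\<bar> \<le> 1 / (2 * s) * x\<^sup>2 + s / 2 * y\<^sup>2"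
proof -
  have "2 * s * \<bar>x * y\<bar> \<le> x\<^sup>2 + s\<^sup>2 * y\<^sup>2"
    using sum_squares_bound[of "\<bar>x\<bar>" "s * \<bar>y\<bar>"] assms
    by (simp add: abs_mult power_mult_distrib mult_ac)
  then show ?thesis
    using assms by (simp add: field_simps power2_eq_square)
qed

lemma absorb_recursion_bound:
  fixes M M' Z q k N e K :: real
  assumes rec: "\<bar>M - k * (Z / 2 + q * M' + M / N)\<bar> \<le> e * (1 + M)"
    and "\<bar>Z\<bar> \<le> M'" "0 \<le> q" "q \<le> 1" "M' \<le> K" "0 \<le> k" "0 < N" "0 \<le> e"
    and small: "k / N + e \<le> 1/2" and "0 \<le> M"
  shows "M \<le> 3 * k * K + 1"
proof -
  have "k * Z \<le> k * M'" "k * (q * M') \<le> k * M'" "k * M' \<le> k * K"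
    using assms by (auto intro!: mult_left_mono mult_left_le_one_le)
  moreover have "(k / N + e) * M \<le> 1/2 * M"
    using mult_right_mono[OF small \<open>0 \<le> M\<close>] .
  moreover have "0 \<le> k / N"
    using assms by simp
  moreover have "M \<le> k * Z / 2 + k * (q * M') + (k / N + e) * M + e"
    using rec by (simp add: abs_le_iff algebra_simps)
  ultimately show ?thesis
    using assms by linarith
qed

section \<open>Linear rank statistics of a uniform random permutation\<close>

lemma double_sum_sq_diff_mult_sq_diff:
  fixes a b :: "'i \<Rightarrow> real"
  assumes "finite S" and sa: "sum a S = 0" and sb: "sum b S = 0"
  shows "(\<Sum>i\<in>S. \<Sum>j\<in>S. (a i - a j)\<^sup>2 * (b i - b j)\<^sup>2)
    = 2 * real (card S) * (\<Sum>j\<in>S. (a j)\<^sup>2 * (b j)\<^sup>2) + 2 * (\<Sum>j\<in>S. (a j)\<^sup>2) * (\<Sum>j\<in>S. (b j)\<^sup>2)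
      + 4 * (\<Sum>j\<in>S. a j * b j)\<^sup>2"
proof -
  define A2 where "A2 = (\<Sum>j\<in>S. (a j)\<^sup>2)"
  define B2 where "B2 = (\<Sum>j\<in>S. (b j)\<^sup>2)"
  define AB where "AB = (\<Sum>j\<in>S. a j * b j)"
  define AB2 where "AB2 = (\<Sum>j\<in>S. (a j)\<^sup>2 * (b j)\<^sup>2)"
  define A2B where "A2B = (\<Sum>j\<in>S. (a j)\<^sup>2 * b j)"
  define AB2' where "AB2' = (\<Sum>j\<in>S. a j * (b j)\<^sup>2)"
  have expand: "(a i - a j)\<^sup>2 * (b i - b j)\<^sup>2 = (a i)\<^sup>2 * (b i)\<^sup>2 + (a j)\<^sup>2 * (b j)\<^sup>2
      + (a i)\<^sup>2 * (b j)\<^sup>2 + (b i)\<^sup>2 * (a j)\<^sup>2 - 2 * ((a i)\<^sup>2 * b i) * b j - 2 * ((b i)\<^sup>2 * a i) * a j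
      - 2 * b i * ((a j)\<^sup>2 * b j) - 2 * a i * (a j * (b j)\<^sup>2) + 4 * (a i * b i) * (a j * b j)" for i j
    by (simp add: power2_eq_square algebra_simps)
  have inner: "(\<Sum>j\<in>S. (a i - a j)\<^sup>2 * (b i - b j)\<^sup>2) = real (card S) * ((a i)\<^sup>2 * (b i)\<^sup>2) + AB2
      + (a i)\<^sup>2 * B2 + (b i)\<^sup>2 * A2 - 2 * b i * A2B - 2 * a i * AB2' + 4 * (a i * b i) * AB" for i
    unfolding expand
    by (simp add: sum.distrib sum_subtractf sa sb A2_def B2_def AB_def AB2_def A2B_def AB2'_def
        flip: sum_distrib_left)
  show ?thesis
    unfolding inner
    by (simp add: sum.distrib sum_subtractf sa sb flip: sum_distrib_left sum_distrib_right
        A2_def B2_def AB_def AB2_def) (simp add: power2_eq_square algebra_simps)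
qed

lemma sum_sq_le_card_mult:
  fixes f :: "'i \<Rightarrow> real"
  assumes "\<forall>j\<in>S. \<bar>f j\<bar> \<le> B"
  shows "(\<Sum>j\<in>S. (f j)\<^sup>2) \<le> real (card S) * B\<^sup>2"
proof -
  have "(\<Sum>j\<in>S. (f j)\<^sup>2) \<le> (\<Sum>j\<in>S. B\<^sup>2)"
    using assms by (intro sum_mono) (metis abs_ge_zero power2_abs power_mono)
  then show ?thesis by simp
qed

definition centre_sq :: "'i set \<Rightarrow> ('i \<Rightarrow> real) \<Rightarrow> 'i \<Rightarrow> real" where
  "centre_sq S f j = (f j)\<^sup>2 - (\<Sum>i\<in>S. (f i)\<^sup>2) / real (card S)"

lemma sum_centre_sq: "finite S \<Longrightarrow> sum (centre_sq S f) S = 0"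
  by (cases "S = {}") (simp_all add: centre_sq_def sum_subtractf)

lemma abs_centre_sq_le:
  assumes "finite S" and B: "\<forall>i\<in>S. \<bar>f i\<bar> \<le> B" and "j \<in> S"
  shows "\<bar>centre_sq S f j\<bar> \<le> B\<^sup>2"
proof -
  have "card S > 0"
    using assms by (auto simp: card_gt_0_iff)
  then have "(\<Sum>i\<in>S. (f i)\<^sup>2) / real (card S) \<le> B\<^sup>2"
    using sum_sq_le_card_mult[OF B] by (simp add: divide_le_eq mult.commute)
  moreover have "(f j)\<^sup>2 \<le> B\<^sup>2"
    using B \<open>j \<in> S\<close> by (metis abs_ge_zero power2_abs power_mono)
  moreover have "0 \<le> (\<Sum>i\<in>S. (f i)\<^sup>2) / real (card S)"
    by (simp add: sum_nonneg)
  ultimately show ?thesis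
    unfolding centre_sq_def abs_le_iff using zero_le_power2[of "f j"] by linarith
qed

lemma sum_comp_permutes: "\<sigma> permutes S \<Longrightarrow> (\<Sum>j\<in>S. f (\<sigma> j)) = sum f S"
  using sum.permute[of \<sigma> S f] by (simp add: comp_def)

definition perm_mean :: "'i set \<Rightarrow> (('i \<Rightarrow> 'i) \<Rightarrow> real) \<Rightarrow> real" where
  "perm_mean S f = (\<Sum>\<sigma> | \<sigma> permutes S. f \<sigma>) / fact (card S)"

locale linear_rank_statistic =
  fixes S :: "'i set" and a b :: "'i \<Rightarrow> real" and c :: real
  assumes finite_S: "finite S" and sum_a: "sum a S = 0" and sum_b: "sum b S = 0"

lemma linear_rank_statistic_centre_sq:
  "finite S \<Longrightarrow> linear_rank_statistic S (centre_sq S f) (centre_sq S g)"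
  by unfold_locales (simp_all add: sum_centre_sq)

context linear_rank_statistic
begin

abbreviation P :: "('i \<Rightarrow> 'i) set" where "P \<equiv> {\<sigma>. \<sigma> permutes S}"

definition X :: "('i \<Rightarrow> 'i) \<Rightarrow> real" where
  "X \<sigma> = c * (\<Sum>j\<in>S. a j * b (\<sigma> j))"

definition D :: "('i \<Rightarrow> 'i) \<Rightarrow> 'i \<Rightarrow> 'i \<Rightarrow> real" where
  "D \<sigma> i j = c * (a i - a j) * (b (\<sigma> j) - b (\<sigma> i))"

definition Y :: "('i \<Rightarrow> 'i) \<Rightarrow> real" where
  "Y = linear_rank_statistic.X S (centre_sq S a) (centre_sq S b) (c\<^sup>2)"

abbreviation E :: "(('i \<Rightarrow> 'i) \<Rightarrow> real) \<Rightarrow> real" where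
  "E \<equiv> perm_mean S"

lemma E_add: "E (\<lambda>\<sigma>. f \<sigma> + g \<sigma>) = E f + E g"
  by (simp add: perm_mean_def sum.distrib add_divide_distrib)

lemma E_cmult: "E (\<lambda>\<sigma>. r * f \<sigma>) = r * E f"
  by (simp add: perm_mean_def sum_distrib_left)

lemma E_const: "E (\<lambda>_. r) = r"
  using card_permutations[OF refl finite_S] by (simp add: perm_mean_def)

lemma E_cong: "(\<And>\<sigma>. \<sigma> \<in> P \<Longrightarrow> f \<sigma> = g \<sigma>) \<Longrightarrow> E f = E g"
  unfolding perm_mean_def by (metis (mono_tags, lifting) sum.cong)

lemma E_mono: "(\<And>\<sigma>. \<sigma> \<in> P \<Longrightarrow> f \<sigma> \<le> g \<sigma>) \<Longrightarrow> E f \<le> E g"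
  unfolding perm_mean_def by (intro divide_right_mono sum_mono) auto

lemma abs_E_le: "\<bar>E f\<bar> \<le> E (\<lambda>\<sigma>. \<bar>f \<sigma>\<bar>)"
  unfolding perm_mean_def by (simp add: divide_right_mono sum_abs)

lemma X_comp_transpose:
  assumes "i \<in> S" "j \<in> S"
  shows "X (\<sigma> \<circ> Transposition.transpose i j) = X \<sigma> + D \<sigma> i j"
proof -
  let ?\<Delta> = "\<lambda>l. a l * (b (\<sigma> (Transposition.transpose i j l)) - b (\<sigma> l))"
  have "X (\<sigma> \<circ> Transposition.transpose i j) - X \<sigma> = c * sum ?\<Delta> S"
    unfolding X_def by (simp add: algebra_simps sum_subtractf)
  also have "sum ?\<Delta> S = sum ?\<Delta> {i, j}"
    by (rule sum.mono_neutral_right[OF finite_S]) (use assms in auto)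
  also have "c * sum ?\<Delta> {i, j} = D \<sigma> i j"
    by (cases "i = j") (simp_all add: D_def algebra_simps)
  finally show ?thesis by (simp add: comp_def)
qed

lemma D_comp_transpose: "D (\<sigma> \<circ> Transposition.transpose i j) i j = - D \<sigma> i j"
  by (simp add: D_def algebra_simps)

lemma sum_D_mult_add_eq_0:
  "(\<Sum>\<sigma>\<in>P. \<Sum>i\<in>S. \<Sum>j\<in>S. D \<sigma> i j * (g (\<sigma> \<circ> Transposition.transpose i j) + g \<sigma>)) = 0"
proof -
  have "(\<Sum>\<sigma>\<in>P. D \<sigma> i j * (g (\<sigma> \<circ> Transposition.transpose i j) + g \<sigma>)) = 0" if "i \<in> S" "j \<in> S" for i j
  proof -
    let ?F = "\<lambda>\<sigma>. D \<sigma> i j * (g (\<sigma> \<circ> Transposition.transpose i j) + g \<sigma>)"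
    have "sum ?F P = (\<Sum>\<sigma>\<in>P. ?F (\<sigma> \<circ> Transposition.transpose i j))"
      using that by (intro sum_permutations_compose_right permutes_swap_id)
    also have "\<dots> = - sum ?F P"
      by (simp add: D_comp_transpose comp_assoc algebra_simps flip: sum_negf)
    finally show ?thesis by simp
  qed
  then have "(\<Sum>i\<in>S. \<Sum>j\<in>S. \<Sum>\<sigma>\<in>P. D \<sigma> i j * (g (\<sigma> \<circ> Transposition.transpose i j) + g \<sigma>)) = 0"
    by simp
  then show ?thesis
    by (simp add: sum.swap[of _ P] sum.swap[of _ P S])
qed

lemma sum_D:
  assumes "\<sigma> \<in> P"
  shows "(\<Sum>i\<in>S. \<Sum>j\<in>S. D \<sigma> i j) = - 2 * real (card S) * X \<sigma>"
proof -
  have "(\<Sum>j\<in>S. b (\<sigma> j)) = 0"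
    using assms sum_b by (simp add: sum_comp_permutes)
  then show ?thesis
    unfolding D_def X_def
    by (simp add: algebra_simps sum.distrib sum_subtractf sum_a flip: sum_distrib_left sum_distrib_right)
      (simp add: sum_distrib_left ac_simps)
qed

text \<open>The exchangeable pair \<open>\<sigma>\<close>, \<open>\<sigma> \<circ> (i j)\<close>: \<open>D\<close> changes sign under the swap, and the \<open>D\<close>
  sum to \<open>-2 |S| X\<close>.\<close>

lemma stein_identity:
  "4 * real (card S) * (\<Sum>\<sigma>\<in>P. g \<sigma> * X \<sigma>)
    = (\<Sum>\<sigma>\<in>P. \<Sum>i\<in>S. \<Sum>j\<in>S. D \<sigma> i j * (g (\<sigma> \<circ> Transposition.transpose i j) - g \<sigma>))"
proof -
  have "(\<Sum>\<sigma>\<in>P. \<Sum>i\<in>S. \<Sum>j\<in>S. D \<sigma> i j * (g (\<sigma> \<circ> Transposition.transpose i j) - g \<sigma>))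
     = (\<Sum>\<sigma>\<in>P. \<Sum>i\<in>S. \<Sum>j\<in>S. D \<sigma> i j * (g (\<sigma> \<circ> Transposition.transpose i j) + g \<sigma>))
       - (\<Sum>\<sigma>\<in>P. 2 * g \<sigma> * (\<Sum>i\<in>S. \<Sum>j\<in>S. D \<sigma> i j))"
    by (simp add: sum_subtractf[symmetric] sum_distrib_left ring_distribs) (simp add: ac_simps)
  also have "\<dots> = - (\<Sum>\<sigma>\<in>P. 2 * g \<sigma> * (- 2 * real (card S) * X \<sigma>))"
    by (simp add: sum_D_mult_add_eq_0 sum_D)
  also have "\<dots> = 4 * real (card S) * (\<Sum>\<sigma>\<in>P. g \<sigma> * X \<sigma>)"
    by (simp add: sum_distrib_left sum_negf[symmetric] algebra_simps)
  finally show ?thesis ..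
qed

lemma sum_X_eq_0: "(\<Sum>\<sigma>\<in>P. X \<sigma>) = 0"
proof (cases "S = {}")
  case True
  then show ?thesis
    unfolding X_def by simp
next
  case False
  then have "card S > 0"
    using finite_S by (simp add: card_gt_0_iff)
  then show ?thesis
    using stein_identity[of "\<lambda>_. 1"] by simp
qed

lemma E_X_eq_0: "E X = 0"
  using sum_X_eq_0 by (simp add: perm_mean_def)

lemma Y_eq:
  assumes "\<sigma> \<in> P"
  shows "Y \<sigma> = c\<^sup>2 * ((\<Sum>j\<in>S. (a j)\<^sup>2 * (b (\<sigma> j))\<^sup>2)
    - (\<Sum>j\<in>S. (a j)\<^sup>2) * (\<Sum>j\<in>S. (b j)\<^sup>2) / real (card S))"
proof (cases "S = {}")
  case True
  then show ?thesis
    unfolding Y_def linear_rank_statistic.X_def[OF linear_rank_statistic_centre_sq[OF finite_S]] by simp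
next
  case False
  then have n: "real (card S) > 0"
    using finite_S by (simp add: card_gt_0_iff)
  show ?thesis
    unfolding Y_def linear_rank_statistic.X_def[OF linear_rank_statistic_centre_sq[OF finite_S]]
      centre_sq_def
    using n sum_comp_permutes[of \<sigma> S "\<lambda>l. (b l)\<^sup>2"] assms
    by (simp add: algebra_simps sum_subtractf sum.distrib
        flip: sum_distrib_left sum_distrib_right sum_divide_distrib)
qed

lemma sum_D_sq:
  assumes "\<sigma> \<in> P"
  shows "(\<Sum>i\<in>S. \<Sum>j\<in>S. (D \<sigma> i j)\<^sup>2)
    = 2 * real (card S) * Y \<sigma> + 4 * c\<^sup>2 * (\<Sum>j\<in>S. (a j)\<^sup>2) * (\<Sum>j\<in>S. (b j)\<^sup>2) + 4 * (X \<sigma>)\<^sup>2"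
proof -
  have "(\<Sum>i\<in>S. \<Sum>j\<in>S. (D \<sigma> i j)\<^sup>2)
      = c\<^sup>2 * (\<Sum>i\<in>S. \<Sum>j\<in>S. (a i - a j)\<^sup>2 * (b (\<sigma> i) - b (\<sigma> j))\<^sup>2)"
    by (simp add: D_def sum_distrib_left power_mult_distrib power2_commute mult.assoc)
  also have "\<dots> = c\<^sup>2 * (2 * real (card S) * (\<Sum>j\<in>S. (a j)\<^sup>2 * (b (\<sigma> j))\<^sup>2)
      + 2 * (\<Sum>j\<in>S. (a j)\<^sup>2) * (\<Sum>j\<in>S. (b j)\<^sup>2) + 4 * (\<Sum>j\<in>S. a j * b (\<sigma> j))\<^sup>2)"
    using double_sum_sq_diff_mult_sq_diff[OF finite_S sum_a, of "b \<circ> \<sigma>"] sum_b assms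
      sum_comp_permutes[of \<sigma> S b] sum_comp_permutes[of \<sigma> S "\<lambda>l. (b l)\<^sup>2"]
    by simp
  finally show ?thesis
    unfolding Y_eq[OF assms] X_def
    using finite_S by (cases "S = {}") (simp_all add: field_simps power_mult_distrib)
qed

lemma abs_X_le:
  assumes "\<sigma> \<in> P" and A: "\<forall>j\<in>S. \<bar>a j\<bar> \<le> A" and B: "\<forall>j\<in>S. \<bar>b j\<bar> \<le> B"
  shows "\<bar>X \<sigma>\<bar> \<le> \<bar>c\<bar> * real (card S) * A * B"
proof -
  have "\<bar>\<Sum>j\<in>S. a j * b (\<sigma> j)\<bar> \<le> (\<Sum>j\<in>S. A * B)"
  proof (intro order_trans[OF sum_abs] sum_mono)
    fix j assume "j \<in> S"
    moreover from this have "\<sigma> j \<in> S"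
      using assms(1) by (simp add: permutes_in_image)
    ultimately show "\<bar>a j * b (\<sigma> j)\<bar> \<le> A * B"
      unfolding abs_mult using A B by (intro mult_mono) (auto intro: order_trans[OF abs_ge_zero])
  qed
  then show ?thesis
    unfolding X_def abs_mult by (simp add: mult_left_mono mult.assoc)
qed

lemma abs_D_le:
  assumes "\<sigma> \<in> P" "i \<in> S" "j \<in> S" and A: "\<forall>j\<in>S. \<bar>a j\<bar> \<le> A" and B: "\<forall>j\<in>S. \<bar>b j\<bar> \<le> B"
  shows "\<bar>D \<sigma> i j\<bar> \<le> 4 * \<bar>c\<bar> * A * B"
proof -
  have "\<sigma> i \<in> S" "\<sigma> j \<in> S"
    using assms by (simp_all add: permutes_in_image)
  then have "\<bar>b (\<sigma> j)\<bar> \<le> B" "\<bar>b (\<sigma> i)\<bar> \<le> B" "\<bar>a i\<bar> \<le> A" "\<bar>a j\<bar> \<le> A"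
    using A B assms(2,3) by auto
  then have "\<bar>b (\<sigma> j) - b (\<sigma> i)\<bar> \<le> 2 * B" "\<bar>a i - a j\<bar> \<le> 2 * A"
    using abs_triangle_ineq4[of "b (\<sigma> j)" "b (\<sigma> i)"] abs_triangle_ineq4[of "a i" "a j"] by linarith+
  then have "\<bar>c\<bar> * (\<bar>a i - a j\<bar> * \<bar>b (\<sigma> j) - b (\<sigma> i)\<bar>) \<le> \<bar>c\<bar> * (2 * A * (2 * B))"
    by (intro mult_left_mono mult_mono) auto
  then show ?thesis
    unfolding D_def abs_mult by (simp add: mult_ac)
qed

lemma abs_Y_le:
  assumes "\<sigma> \<in> P" and A: "\<forall>j\<in>S. \<bar>a j\<bar> \<le> A" and B: "\<forall>j\<in>S. \<bar>b j\<bar> \<le> B"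
  shows "\<bar>Y \<sigma>\<bar> \<le> c\<^sup>2 * real (card S) * A\<^sup>2 * B\<^sup>2"
proof -
  interpret T: linear_rank_statistic S "centre_sq S a" "centre_sq S b" "c\<^sup>2"
    using finite_S by (rule linear_rank_statistic_centre_sq)
  show ?thesis
    unfolding Y_def using assms(1) abs_centre_sq_le[OF finite_S] A B
    by (intro order_trans[OF T.abs_X_le]) auto
qed

definition stein_remainder :: "nat \<Rightarrow> ('i \<Rightarrow> 'i) \<Rightarrow> real" where
  "stein_remainder k \<sigma> = (\<Sum>i\<in>S. \<Sum>j\<in>S.
    D \<sigma> i j * ((X \<sigma> + D \<sigma> i j) ^ k - X \<sigma> ^ k - real k * X \<sigma> ^ (k - 1) * D \<sigma> i j))"

lemma sum_D_mult_power_increment: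
  "(\<Sum>i\<in>S. \<Sum>j\<in>S. D \<sigma> i j * (X (\<sigma> \<circ> Transposition.transpose i j) ^ k - X \<sigma> ^ k))
    = real k * X \<sigma> ^ (k - 1) * (\<Sum>i\<in>S. \<Sum>j\<in>S. (D \<sigma> i j)\<^sup>2) + stein_remainder k \<sigma>"
  by (simp add: stein_remainder_def X_comp_transpose sum_distrib_left power2_eq_square algebra_simps
      flip: sum.distrib cong: sum.cong)

lemma E_stein_power:
  assumes m: "m \<ge> 1"
  shows "4 * real (card S) * E (\<lambda>\<sigma>. X \<sigma> ^ (2*m))
    = real (2*m - 1) * (2 * real (card S) * E (\<lambda>\<sigma>. X \<sigma> ^ (2*m - 2) * Y \<sigma>)
      + 4 * (c\<^sup>2 * (\<Sum>j\<in>S. (a j)\<^sup>2) * (\<Sum>j\<in>S. (b j)\<^sup>2)) * E (\<lambda>\<sigma>. X \<sigma> ^ (2*m - 2))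
      + 4 * E (\<lambda>\<sigma>. X \<sigma> ^ (2*m))) + E (stein_remainder (2*m - 1))"
proof -
  define k where "k = 2*m - 1"
  define C where "C = c\<^sup>2 * (\<Sum>j\<in>S. (a j)\<^sup>2) * (\<Sum>j\<in>S. (b j)\<^sup>2)"
  have k: "k - 1 = 2*m - 2" "Suc k = 2*m" "k - 1 + 2 = 2*m"
    using m by (auto simp: k_def)
  have "X \<sigma> ^ (2*m) = X \<sigma> ^ k * X \<sigma>" for \<sigma>
    by (simp flip: k(2) add: power_Suc2)
  then have "4 * real (card S) * E (\<lambda>\<sigma>. X \<sigma> ^ (2*m))
      = E (\<lambda>\<sigma>. \<Sum>i\<in>S. \<Sum>j\<in>S. D \<sigma> i j * (X (\<sigma> \<circ> Transposition.transpose i j) ^ k - X \<sigma> ^ k))"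
    unfolding perm_mean_def using stein_identity[of "\<lambda>\<sigma>. X \<sigma> ^ k"]
    by (simp add: sum_distrib_left mult_ac)
  also have "\<dots> = E (\<lambda>\<sigma>. real k * X \<sigma> ^ (k - 1) * (2 * real (card S) * Y \<sigma> + 4 * C + 4 * (X \<sigma>)\<^sup>2)
      + stein_remainder k \<sigma>)"
    by (intro E_cong) (simp add: sum_D_mult_power_increment sum_D_sq C_def mult.assoc)
  also have "\<dots> = real k * (2 * real (card S) * E (\<lambda>\<sigma>. X \<sigma> ^ (k - 1) * Y \<sigma>)
      + 4 * C * E (\<lambda>\<sigma>. X \<sigma> ^ (k - 1)) + 4 * E (\<lambda>\<sigma>. X \<sigma> ^ (2*m))) + E (stein_remainder k)"
  proof -
    have "X \<sigma> ^ (k - 1) * (X \<sigma>)\<^sup>2 = X \<sigma> ^ (2*m)" for \<sigma>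
      using k(3) by (metis power_add)
    then show ?thesis
      by (simp add: E_add E_cmult algebra_simps flip: E_cmult)
  qed
  finally show ?thesis
    unfolding k(1)[symmetric] k_def[symmetric] C_def[symmetric] .
qed

lemma abs_E_stein_remainder_le:
  assumes m: "m \<ge> 1" and A: "\<forall>j\<in>S. \<bar>a j\<bar> \<le> A" and B: "\<forall>j\<in>S. \<bar>b j\<bar> \<le> B"
    and small: "4 * \<bar>c\<bar> * A * B \<le> 1"
  defines "K \<equiv> real (2*m - 1) ^ 2 * 2 ^ (2*m)"
  shows "\<bar>E (stein_remainder (2*m - 1))\<bar>
    \<le> (real (card S))\<^sup>2 * ((4 * \<bar>c\<bar> * A * B) ^ 3 * K * (1 + E (\<lambda>\<sigma>. X \<sigma> ^ (2*m))))"
proof -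
  have "\<bar>stein_remainder (2*m - 1) \<sigma>\<bar> \<le> (real (card S))\<^sup>2 * ((4 * \<bar>c\<bar> * A * B) ^ 3 * K * (1 + X \<sigma> ^ (2*m)))"
    if "\<sigma> \<in> P" for \<sigma>
  proof -
    have "2*m - 1 - 1 = 2*m - 2"
      by simp
    then have "\<bar>D \<sigma> i j * ((X \<sigma> + D \<sigma> i j) ^ (2*m - 1) - X \<sigma> ^ (2*m - 1)
        - real (2*m - 1) * X \<sigma> ^ (2*m - 1 - 1) * D \<sigma> i j)\<bar>
        \<le> (4 * \<bar>c\<bar> * A * B) ^ 3 * K * (1 + X \<sigma> ^ (2*m))" if "i \<in> S" "j \<in> S" for i j
      using odd_power_increment_bound[OF abs_D_le[OF \<open>\<sigma> \<in> P\<close> that A B] small m, of "X \<sigma>"]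
      by (simp only: K_def)
    then have "\<bar>stein_remainder (2*m - 1) \<sigma>\<bar>
        \<le> (\<Sum>i\<in>S. \<Sum>j\<in>S. (4 * \<bar>c\<bar> * A * B) ^ 3 * K * (1 + X \<sigma> ^ (2*m)))"
      unfolding stein_remainder_def by (intro order_trans[OF sum_abs] sum_mono order_trans[OF sum_abs]) auto
    then show ?thesis
      by (simp add: power2_eq_square)
  qed
  then have "E (\<lambda>\<sigma>. \<bar>stein_remainder (2*m - 1) \<sigma>\<bar>)
      \<le> E (\<lambda>\<sigma>. (real (card S))\<^sup>2 * ((4 * \<bar>c\<bar> * A * B) ^ 3 * K * (1 + X \<sigma> ^ (2*m))))"
    by (intro E_mono) auto
  then show ?thesis
    by (intro order_trans[OF abs_E_le]) (simp add: E_cmult E_add E_const)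
qed

lemma even_moment_recursion:
  assumes m: "m \<ge> 1" and "S \<noteq> {}" and A: "\<forall>j\<in>S. \<bar>a j\<bar> \<le> A" and B: "\<forall>j\<in>S. \<bar>b j\<bar> \<le> B"
    and small: "4 * \<bar>c\<bar> * A * B \<le> 1"
  shows "\<bar>E (\<lambda>\<sigma>. X \<sigma> ^ (2*m)) - real (2*m - 1) * (E (\<lambda>\<sigma>. X \<sigma> ^ (2*m - 2) * Y \<sigma>) / 2
      + c\<^sup>2 * (\<Sum>j\<in>S. (a j)\<^sup>2) * (\<Sum>j\<in>S. (b j)\<^sup>2) / real (card S) * E (\<lambda>\<sigma>. X \<sigma> ^ (2*m - 2))
      + E (\<lambda>\<sigma>. X \<sigma> ^ (2*m)) / real (card S))\<bar>
    \<le> 16 * real (card S) * (\<bar>c\<bar> * A * B) ^ 3 * (real (2*m - 1) ^ 2 * 2 ^ (2*m))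
      * (1 + E (\<lambda>\<sigma>. X \<sigma> ^ (2*m)))"
proof -
  define n where "n = real (card S)"
  have n: "n > 0"
    using \<open>S \<noteq> {}\<close> finite_S by (simp add: n_def card_gt_0_iff)
  have diff: "E (\<lambda>\<sigma>. X \<sigma> ^ (2*m)) - real (2*m - 1) * (E (\<lambda>\<sigma>. X \<sigma> ^ (2*m - 2) * Y \<sigma>) / 2
      + c\<^sup>2 * (\<Sum>j\<in>S. (a j)\<^sup>2) * (\<Sum>j\<in>S. (b j)\<^sup>2) / n * E (\<lambda>\<sigma>. X \<sigma> ^ (2*m - 2))
      + E (\<lambda>\<sigma>. X \<sigma> ^ (2*m)) / n) = E (stein_remainder (2*m - 1)) / (4 * n)"
  proof -
    have "E (stein_remainder (2*m - 1)) = 4 * n * E (\<lambda>\<sigma>. X \<sigma> ^ (2*m))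
      - real (2*m - 1) * (2 * n * E (\<lambda>\<sigma>. X \<sigma> ^ (2*m - 2) * Y \<sigma>)
      + 4 * (c\<^sup>2 * (\<Sum>j\<in>S. (a j)\<^sup>2) * (\<Sum>j\<in>S. (b j)\<^sup>2)) * E (\<lambda>\<sigma>. X \<sigma> ^ (2*m - 2))
      + 4 * E (\<lambda>\<sigma>. X \<sigma> ^ (2*m)))"
      using E_stein_power[OF m, folded n_def] by simp
    then show ?thesis
      using n by (simp only:) (simp add: field_simps)
  qed
  have "\<bar>E (stein_remainder (2*m - 1)) / (4 * n)\<bar>
      \<le> n\<^sup>2 * ((4 * \<bar>c\<bar> * A * B) ^ 3 * (real (2*m - 1) ^ 2 * 2 ^ (2*m)) * (1 + E (\<lambda>\<sigma>. X \<sigma> ^ (2*m))))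
        / (4 * n)"
    using abs_E_stein_remainder_le[OF m A B small, folded n_def] n by (simp add: divide_right_mono)
  also have "\<dots> = 16 * n * (\<bar>c\<bar> * A * B) ^ 3 * (real (2*m - 1) ^ 2 * 2 ^ (2*m))
      * (1 + E (\<lambda>\<sigma>. X \<sigma> ^ (2*m)))"
    using n by (simp add: power_mult_distrib power2_eq_square)
  finally show ?thesis
    unfolding n_def[symmetric] diff .
qed

lemma E_odd_power_eq_0:
  assumes \<rho>: "\<rho> permutes S" and b_\<rho>: "\<forall>l\<in>S. b (\<rho> l) = - b l"
  shows "E (\<lambda>\<sigma>. X \<sigma> ^ (2*j + 1)) = 0"
proof -
  have "X (\<rho> \<circ> \<sigma>) = - X \<sigma>" if "\<sigma> \<in> P" for \<sigma>
    using that b_\<rho> by (simp add: X_def permutes_in_image sum_negf)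
  then have "(\<Sum>\<sigma>\<in>P. X \<sigma> ^ (2*j + 1)) = - (\<Sum>\<sigma>\<in>P. X \<sigma> ^ (2*j + 1))"
    by (subst setum_permutations_compose_left[OF \<rho>]) (simp add: sum_negf)
  then show ?thesis
    by (simp add: perm_mean_def)
qed

text \<open>\<open>Y\<close> is itself a linear rank statistic, so the case \<open>m = 1\<close> of the recursion applies to it;
  its own second-order term has mean zero by \<open>E_X_eq_0\<close>.\<close>

lemma E_Y_sq_le:
  assumes "S \<noteq> {}" and A: "\<forall>j\<in>S. \<bar>a j\<bar> \<le> A" and B: "\<forall>j\<in>S. \<bar>b j\<bar> \<le> B"
    and small: "4 * c\<^sup>2 * A\<^sup>2 * B\<^sup>2 \<le> 1"
  defines "t \<equiv> c\<^sup>2 * A\<^sup>2 * B\<^sup>2"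
  shows "E (\<lambda>\<sigma>. (Y \<sigma>)\<^sup>2) \<le> real (card S) * t\<^sup>2 + E (\<lambda>\<sigma>. (Y \<sigma>)\<^sup>2) / real (card S)
    + 64 * real (card S) * t ^ 3 * (1 + E (\<lambda>\<sigma>. (Y \<sigma>)\<^sup>2))"
proof -
  interpret T: linear_rank_statistic S "centre_sq S a" "centre_sq S b" "c\<^sup>2"
    using finite_S by (rule linear_rank_statistic_centre_sq)
  interpret T2: linear_rank_statistic S "centre_sq S (centre_sq S a)" "centre_sq S (centre_sq S b)" "(c\<^sup>2)\<^sup>2"
    using finite_S by (rule linear_rank_statistic_centre_sq)
  have TX: "T.X = Y"
    by (simp add: Y_def)
  have A': "\<forall>j\<in>S. \<bar>centre_sq S a j\<bar> \<le> A\<^sup>2" and B': "\<forall>j\<in>S. \<bar>centre_sq S b j\<bar> \<le> B\<^sup>2"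
    using abs_centre_sq_le[OF finite_S] A B by blast+
  have EY: "E T.Y = 0"
    using T2.E_X_eq_0 by (simp add: T.Y_def)
  have n: "real (card S) > 0"
    using \<open>S \<noteq> {}\<close> finite_S by (simp add: card_gt_0_iff)
  define q where "q = (c\<^sup>2)\<^sup>2 * (\<Sum>j\<in>S. (centre_sq S a j)\<^sup>2) * (\<Sum>j\<in>S. (centre_sq S b j)\<^sup>2)
    / real (card S)"
  have "q \<le> (c\<^sup>2)\<^sup>2 * ((real (card S) * (A\<^sup>2)\<^sup>2) * (real (card S) * (B\<^sup>2)\<^sup>2)) / real (card S)"
    unfolding q_def mult.assoc[of "(c\<^sup>2)\<^sup>2"] using A' B'
    by (intro divide_right_mono mult_left_mono mult_mono sum_sq_le_card_mult) (auto intro: sum_nonneg)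
  also have "\<dots> = real (card S) * t\<^sup>2"
    using n by (simp add: t_def power2_eq_square)
  finally have q: "q \<le> real (card S) * t\<^sup>2" .
  have "\<bar>E (\<lambda>\<sigma>. (Y \<sigma>)\<^sup>2) - (0 / 2 + q * 1 + E (\<lambda>\<sigma>. (Y \<sigma>)\<^sup>2) / real (card S))\<bar>
      \<le> 16 * real (card S) * t ^ 3 * (1 * 4) * (1 + E (\<lambda>\<sigma>. (Y \<sigma>)\<^sup>2))"
    using T.even_moment_recursion[of 1, OF _ \<open>S \<noteq> {}\<close> A' B'] small
    unfolding TX by (simp add: EY E_const q_def t_def)
  then show ?thesis
    using q by (simp add: abs_le_iff)
qed

end

section \<open>The cosine-weighted rank statistic\<close>

lemma sum_cis_multiple_eq_0:
  assumes "0 < q" "q < n"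
  shows "(\<Sum>j<n. cis (2 * pi * real q * real j / real n)) = 0"
proof -
  define \<omega> where "\<omega> = cis (2 * pi * real q / real n)"
  have n: "real n > 0"
    using assms by simp
  have pow: "\<omega> ^ j = cis (2 * pi * real q * real j / real n)" for j
    unfolding \<omega>_def Complex.DeMoivre by (simp add: mult_ac)
  have "\<omega> \<noteq> 1"
  proof
    assume "\<omega> = 1"
    then have "cos (2 * pi * real q / real n) = 1"
      by (simp add: \<omega>_def complex_eq_iff)
    then obtain k :: int where "2 * pi * real q / real n = 2 * pi * of_int k"
      by (auto simp: cos_one_2pi_int)
    then have "int q = int n * k"
      using n by (simp add: field_simps) (metis of_int_eq_iff of_int_mult of_int_of_nat_eq)
    moreover have "k \<le> 0 \<or> k \<ge> 1"
      by linarith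
    ultimately show False
      using assms by (smt (verit) mult_nonneg_nonpos mult_le_cancel_left1 of_nat_0_le_iff of_nat_less_iff)
  qed
  moreover have "\<omega> ^ n = 1"
    using n by (simp add: pow cis_multiple_2pi)
  ultimately show ?thesis
    by (simp add: geometric_sum flip: pow)
qed

lemma sum_cos_multiple_eq_0:
  assumes "0 < q" "q < n"
  shows "(\<Sum>j=1..n. cos (2 * pi * real q * real j / real n)) = 0"
proof -
  have "Re (\<Sum>j<n. cis (2 * pi * real q * real j / real n)) = 0"
    using sum_cis_multiple_eq_0[OF assms] by simp
  then have "(\<Sum>j<n. cos (2 * pi * real q * real j / real n)) = 0"
    by simp
  moreover have "(\<Sum>j=1..n. cos (2 * pi * real q * real j / real n))
      = (\<Sum>j<Suc n. cos (2 * pi * real q * real j / real n)) - 1"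
    by (simp add: atLeast1_atMost_eq_remove0 lessThan_Suc_atMost sum.remove[of "{..n}" 0])
  moreover have "cos (2 * pi * real q * real n / real n) = 1"
    using cos_2npi[of q] assms by (simp add: mult_ac)
  ultimately show ?thesis
    by simp
qed

definition cos_weight :: "nat \<Rightarrow> nat \<Rightarrow> real" where
  "cos_weight n j = cos (2 * pi * real j / real n)"

text \<open>Centring the ranks does not change \<open>Xn\<close> because the cosine weights sum to zero.\<close>

definition rank_weight :: "nat \<Rightarrow> nat \<Rightarrow> real" where
  "rank_weight n l = real l - (real n + 1) / 2"

definition scaling :: "nat \<Rightarrow> real" where
  "scaling n = 1 / real n powr (3/2)"

abbreviation rank_stat :: "nat \<Rightarrow> (nat \<Rightarrow> nat) \<Rightarrow> real" where
  "rank_stat n \<equiv> linear_rank_statistic.X {1..n} (cos_weight n) (rank_weight n) (scaling n)"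

abbreviation variance_fluct :: "nat \<Rightarrow> (nat \<Rightarrow> nat) \<Rightarrow> real" where
  "variance_fluct n \<equiv> linear_rank_statistic.Y {1..n} (cos_weight n) (rank_weight n) (scaling n)"

lemma sum_cos_weight: "n \<ge> 2 \<Longrightarrow> sum (cos_weight n) {1..n} = 0"
  using sum_cos_multiple_eq_0[of 1 n] by (simp add: cos_weight_def)

lemma sum_cos_weight_sq:
  assumes "n \<ge> 3"
  shows "(\<Sum>j=1..n. (cos_weight n j)\<^sup>2) = real n / 2"
proof -
  have "(cos_weight n j)\<^sup>2 = 1/2 + cos (2 * pi * real 2 * real j / real n) / 2" for j
    using cos_double_cos[of "2 * pi * real j / real n"]
    by (simp add: cos_weight_def mult_ac) (simp add: field_simps)
  then have "(\<Sum>j=1..n. (cos_weight n j)\<^sup>2)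
      = real n / 2 + (\<Sum>j=1..n. cos (2 * pi * real 2 * real j / real n)) / 2"
    by (simp add: sum.distrib sum_divide_distrib)
  also have "(\<Sum>j=1..n. cos (2 * pi * real 2 * real j / real n)) = 0"
    using assms by (intro sum_cos_multiple_eq_0) auto
  finally show ?thesis by simp
qed

lemma sum_atLeastAtMost_minus: "(\<Sum>l=1..n. real l - x) = real n * (real n + 1) / 2 - real n * x"
  by (induction n) (auto simp: algebra_simps)

lemma sum_atLeastAtMost_minus_sq:
  "(\<Sum>l=1..n. (real l - x)\<^sup>2)
    = real n * (real n + 1) * (2 * real n + 1) / 6 - x * real n * (real n + 1) + real n * x\<^sup>2"
  by (induction n) (auto simp: algebra_simps power2_eq_square)

lemma sum_rank_weight: "sum (rank_weight n) {1..n} = 0"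
  unfolding rank_weight_def sum_atLeastAtMost_minus by (simp add: algebra_simps)

lemma sum_rank_weight_sq: "(\<Sum>l=1..n. (rank_weight n l)\<^sup>2) = real n * ((real n)\<^sup>2 - 1) / 12"
  unfolding rank_weight_def sum_atLeastAtMost_minus_sq by (simp add: algebra_simps power2_eq_square)

lemma abs_rank_weight_le:
  assumes "l \<in> {1..n}"
  shows "\<bar>rank_weight n l\<bar> \<le> real n"
proof -
  have "1 \<le> real l" "real l \<le> real n"
    using assms by auto
  then show ?thesis
    unfolding rank_weight_def abs_le_iff by argo
qed

lemma scaling_eq: "n > 0 \<Longrightarrow> scaling n = 1 / (real n * sqrt (real n))"
  by (simp add: scaling_def powr_half_sqrt[symmetric] powr_add[symmetric] powr_mult_base)

lemma scaling_sq: "n > 0 \<Longrightarrow> (scaling n)\<^sup>2 = 1 / real n ^ 3"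
  by (simp add: scaling_eq power_mult_distrib power_divide power3_eq_cube power2_eq_square)

lemma linear_rank_statistic_cos_weight:
  assumes "n \<ge> 2"
  shows "linear_rank_statistic {1..n} (cos_weight n) (rank_weight n)"
  by unfold_locales (use sum_cos_weight[OF assms] sum_rank_weight in auto)

lemma Xn_eq_rank_stat:
  assumes "n \<ge> 2"
  shows "Xn n \<sigma> = rank_stat n \<sigma>"
proof -
  have "rank_stat n \<sigma>
      = scaling n * (\<Sum>j=1..n. cos_weight n j * real (\<sigma> j) - (real n + 1) / 2 * cos_weight n j)"
    unfolding linear_rank_statistic.X_def[OF linear_rank_statistic_cos_weight[OF assms]]
    by (simp add: rank_weight_def algebra_simps)
  also have "\<dots> = scaling n * ((\<Sum>j=1..n. cos_weight n j * real (\<sigma> j))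
      - (real n + 1) / 2 * sum (cos_weight n) {1..n})"
    by (simp add: sum_subtractf sum_distrib_left)
  also have "\<dots> = scaling n * (\<Sum>j=1..n. cos_weight n j * real (\<sigma> j))"
    using sum_cos_weight[OF assms] by simp
  also have "\<dots> = Xn n \<sigma>"
    by (simp add: Xn_def scaling_def cos_weight_def sum_divide_distrib mult_ac)
  finally show ?thesis ..
qed

lemma moment_eq_perm_mean: "n \<ge> 2 \<Longrightarrow> moment n k = perm_mean {1..n} (\<lambda>\<sigma>. rank_stat n \<sigma> ^ k)"
  unfolding moment_def perm_mean_def by (simp add: Xn_eq_rank_stat)

definition reflect :: "nat \<Rightarrow> nat \<Rightarrow> nat" where
  "reflect n l = (if l \<in> {1..n} then n + 1 - l else l)"

lemma reflect_permutes: "reflect n permutes {1..n}"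
proof (rule bij_imp_permutes)
  show "bij_betw (reflect n) {1..n} {1..n}"
    by (rule bij_betw_byWitness[where f' = "reflect n"]) (auto simp: reflect_def)
qed (auto simp: reflect_def)

lemma rank_weight_reflect: "l \<in> {1..n} \<Longrightarrow> rank_weight n (reflect n l) = - rank_weight n l"
  by (auto simp: reflect_def rank_weight_def of_nat_diff field_simps)

lemma moment_odd_eq_0:
  assumes "n \<ge> 2"
  shows "moment n (2*j + 1) = 0"
proof -
  interpret linear_rank_statistic "{1..n}" "cos_weight n" "rank_weight n" "scaling n"
    using assms by (rule linear_rank_statistic_cos_weight)
  show ?thesis
    unfolding moment_eq_perm_mean[OF assms]
    using rank_weight_reflect by (intro E_odd_power_eq_0[OF reflect_permutes]) blast
qed

definition cross_moment :: "nat \<Rightarrow> nat \<Rightarrow> real" where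
  "cross_moment j n = perm_mean {1..n} (\<lambda>\<sigma>. rank_stat n \<sigma> ^ (2*j) * variance_fluct n \<sigma>)"

lemma moment_even_recursion:
  assumes n: "n \<ge> 16"
  shows "\<bar>moment n (2 * Suc j) - real (2*j + 1) * (cross_moment j n / 2
      + ((real n)\<^sup>2 - 1) / (24 * (real n)\<^sup>2) * moment n (2*j) + moment n (2 * Suc j) / real n)\<bar>
    \<le> 16 / sqrt (real n) * (real (2*j + 1) ^ 2 * 2 ^ (2 * Suc j)) * (1 + moment n (2 * Suc j))"
proof -
  have n2: "n \<ge> 2" and "n \<ge> 3" and "n > 0" and n0: "real n > 0"
    using n by auto
  interpret linear_rank_statistic "{1..n}" "cos_weight n" "rank_weight n" "scaling n"
    using n2 by (rule linear_rank_statistic_cos_weight)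
  have c: "\<bar>scaling n\<bar> * 1 * real n = 1 / sqrt (real n)"
    using n0 by (simp add: scaling_eq field_simps)
  have "4 \<le> sqrt (real n)"
    using real_sqrt_le_mono[of 16 "real n"] n by simp
  have small: "4 * \<bar>scaling n\<bar> * 1 * real n \<le> 1"
  proof -
    have "4 * \<bar>scaling n\<bar> * 1 * real n = 4 * (\<bar>scaling n\<bar> * 1 * real n)"
      by (simp only: mult.assoc)
    also have "\<dots> = 4 / sqrt (real n)"
      unfolding c by simp
    also have "\<dots> \<le> 1"
      using \<open>4 \<le> sqrt (real n)\<close> by (simp add: divide_le_eq)
    finally show ?thesis .
  qed
  have q: "(scaling n)\<^sup>2 * (\<Sum>j\<in>{1..n}. (cos_weight n j)\<^sup>2) * (\<Sum>l\<in>{1..n}. (rank_weight n l)\<^sup>2)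
      / real (card {1..n}) = ((real n)\<^sup>2 - 1) / (24 * (real n)\<^sup>2)"
    unfolding scaling_sq[OF \<open>n > 0\<close>] sum_cos_weight_sq[OF \<open>n \<ge> 3\<close>] sum_rank_weight_sq
    using n0 by (simp add: field_simps power3_eq_cube power2_eq_square)
  have err: "16 * real (card {1..n}) * (\<bar>scaling n\<bar> * 1 * real n) ^ 3 = 16 / sqrt (real n)"
    unfolding c using n0 by (simp add: field_simps power3_eq_cube)
  have bounds: "\<forall>j\<in>{1..n}. \<bar>cos_weight n j\<bar> \<le> 1" "\<forall>l\<in>{1..n}. \<bar>rank_weight n l\<bar> \<le> real n"
    by (simp_all add: cos_weight_def abs_rank_weight_le)
  have "1 \<le> Suc j" "{1..n} \<noteq> {}" and arith: "2 * Suc j - 1 = 2*j + 1" "2 * Suc j - 2 = 2*j"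
    and card: "card {1..n} = n"
    using n2 by simp_all
  from even_moment_recursion[OF this(1,2) bounds small, unfolded q err arith, unfolded card] show ?thesis
    unfolding moment_eq_perm_mean[OF n2] cross_moment_def .
qed

lemma abs_variance_fluct_le_1:
  assumes "n \<ge> 2" "\<sigma> permutes {1..n}"
  shows "\<bar>variance_fluct n \<sigma>\<bar> \<le> 1"
proof -
  interpret linear_rank_statistic "{1..n}" "cos_weight n" "rank_weight n" "scaling n"
    using assms(1) by (rule linear_rank_statistic_cos_weight)
  have "\<bar>Y \<sigma>\<bar> \<le> (scaling n)\<^sup>2 * real (card {1..n}) * 1\<^sup>2 * (real n)\<^sup>2"
    using assms(2) by (intro abs_Y_le) (auto simp: cos_weight_def abs_rank_weight_le)
  also have "\<dots> = 1"
    using assms(1) by (simp add: scaling_sq[of n] power3_eq_cube del: power2_eq_square)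
      (simp add: power2_eq_square)
  finally show ?thesis .
qed

lemma perm_mean_variance_fluct_sq_le:
  assumes n: "n \<ge> 16"
  shows "perm_mean {1..n} (\<lambda>\<sigma>. (variance_fluct n \<sigma>)\<^sup>2) \<le> 10 / real n"
proof -
  interpret linear_rank_statistic "{1..n}" "cos_weight n" "rank_weight n" "scaling n"
    using n by (intro linear_rank_statistic_cos_weight) simp
  define M where "M = E (\<lambda>\<sigma>. (Y \<sigma>)\<^sup>2)"
  have n0: "real n > 0"
    using n by simp
  have t: "(scaling n)\<^sup>2 * 1\<^sup>2 * (real n)\<^sup>2 = 1 / real n"
    using n0 by (simp add: scaling_sq[of n] power3_eq_cube) (simp add: power2_eq_square)
  have "4 * (scaling n)\<^sup>2 * 1\<^sup>2 * (real n)\<^sup>2 \<le> 1"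
    using t n by (simp add: mult.assoc)
  from E_Y_sq_le[of 1 "real n", OF _ _ _ this, unfolded t] n
  have "M \<le> real n * (1 / real n)\<^sup>2 + M / real n + 64 * real n * (1 / real n) ^ 3 * (1 + M)"
    unfolding M_def by (simp add: cos_weight_def abs_rank_weight_le)
  then have "real n * M \<le> real n * (real n * (1 / real n)\<^sup>2 + M / real n
      + 64 * real n * (1 / real n) ^ 3 * (1 + M))"
    using n0 by (intro mult_left_mono) auto
  also have "\<dots> = 1 + M + 64 / real n * (1 + M)"
    using n0 by (simp add: field_simps power2_eq_square power3_eq_cube)
  finally have "real n * M \<le> 1 + M + 64 / real n * (1 + M)" .
  moreover have "M \<ge> 0"
    unfolding M_def perm_mean_def by (simp add: sum_nonneg)
  moreover from this have "64 / real n * (1 + M) \<le> 4 * (1 + M)"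
    using n by (intro mult_right_mono) (simp_all add: divide_le_eq)
  moreover have "real n * M / 2 \<le> real n * M - 5 * M"
  proof -
    have "real n / 2 * M \<le> (real n - 5) * M"
      using \<open>M \<ge> 0\<close> n by (intro mult_right_mono) auto
    then show ?thesis
      by (simp add: algebra_simps)
  qed
  ultimately have "real n * M \<le> 10"
    by argo
  then show ?thesis
    using n0 by (simp add: M_def field_simps)
qed

lemma abs_cross_moment_le:
  assumes "n \<ge> 2"
  shows "\<bar>cross_moment j n\<bar> \<le> moment n (2*j)"
proof -
  interpret linear_rank_statistic "{1..n}" "cos_weight n" "rank_weight n" "scaling n"
    using assms by (rule linear_rank_statistic_cos_weight)
  have "\<bar>X \<sigma> ^ (2*j) * Y \<sigma>\<bar> \<le> X \<sigma> ^ (2*j)" if "\<sigma> \<in> P" for \<sigma>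
    using abs_variance_fluct_le_1[OF assms] that
    by (simp add: abs_mult zero_le_even_power mult_left_le)
  then show ?thesis
    unfolding cross_moment_def moment_eq_perm_mean[OF assms]
    by (intro order_trans[OF abs_E_le] E_mono)
qed

lemma abs_cross_moment_le_sqrt:
  assumes "n \<ge> 2"
  shows "\<bar>cross_moment j n\<bar>
    \<le> moment n (4*j) / (2 * sqrt (real n)) + sqrt (real n) / 2 * perm_mean {1..n} (\<lambda>\<sigma>. (variance_fluct n \<sigma>)\<^sup>2)"
proof -
  interpret linear_rank_statistic "{1..n}" "cos_weight n" "rank_weight n" "scaling n"
    using assms by (rule linear_rank_statistic_cos_weight)
  have "\<bar>X \<sigma> ^ (2*j) * Y \<sigma>\<bar> \<le> 1 / (2 * sqrt (real n)) * X \<sigma> ^ (4*j) + sqrt (real n) / 2 * (Y \<sigma>)\<^sup>2" for \<sigma>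
    using abs_mult_le_weighted_sq[of "sqrt (real n)" "X \<sigma> ^ (2*j)" "Y \<sigma>"] assms
    by (simp flip: power_mult add: mult.commute)
  then have "\<bar>cross_moment j n\<bar>
      \<le> E (\<lambda>\<sigma>. 1 / (2 * sqrt (real n)) * X \<sigma> ^ (4*j) + sqrt (real n) / 2 * (Y \<sigma>)\<^sup>2)"
    unfolding cross_moment_def by (intro order_trans[OF abs_E_le] E_mono)
  then show ?thesis
    unfolding moment_eq_perm_mean[OF assms] E_add E_cmult by simp
qed

section \<open>Convergence of the moments\<close>

lemma moment_0: "moment n 0 = 1"
  using card_permutations[of "{1..n}" n] by (simp add: moment_def)

lemma moment_even_nonneg: "0 \<le> moment n (2*j)"
  unfolding moment_def by (intro mult_nonneg_nonneg sum_nonneg) (auto simp: zero_le_even_power)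

lemma moment_even_bounded: "\<exists>K. \<forall>\<^sub>F n in sequentially. moment n (2*j) \<le> K"
proof (induction j)
  case 0
  show ?case
    by (intro exI[of _ 1]) (simp add: moment_0)
next
  case (Suc j)
  then obtain K where K: "\<forall>\<^sub>F n in sequentially. moment n (2*j) \<le> K"
    by blast
  define k where "k = real (2*j + 1)"
  define C where "C = real (2*j + 1) ^ 2 * 2 ^ (2 * Suc j)"
  have "(\<lambda>n. k / real n + 16 / sqrt (real n) * C) \<longlonglongrightarrow> 0"
    by real_asymp
  then have "\<forall>\<^sub>F n in sequentially. k / real n + 16 / sqrt (real n) * C < 1/2"
    by (rule order_tendstoD) simp
  with K eventually_ge_at_top[of 16]
  have "\<forall>\<^sub>F n in sequentially. moment n (2 * Suc j) \<le> 3 * k * K + 1"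
  proof eventually_elim
    case (elim n)
    then have "n \<ge> 2"
      by simp
    show ?case
    proof (rule absorb_recursion_bound[OF moment_even_recursion[OF \<open>n \<ge> 16\<close>, of j, folded k_def C_def]])
      show "\<bar>cross_moment j n\<bar> \<le> moment n (2*j)"
        using \<open>n \<ge> 2\<close> by (rule abs_cross_moment_le)
      show "0 \<le> ((real n)\<^sup>2 - 1) / (24 * (real n)\<^sup>2)" "((real n)\<^sup>2 - 1) / (24 * (real n)\<^sup>2) \<le> 1"
        using \<open>n \<ge> 16\<close> by (simp_all add: field_simps one_le_power)
      show "0 \<le> moment n (2 * Suc j)"
        by (rule moment_even_nonneg)
    qed (use elim in \<open>simp_all add: k_def C_def\<close>)
  qed
  then show ?case
    by blast
qed

lemma cross_moment_tendsto_0: "(\<lambda>n. cross_moment j n) \<longlonglongrightarrow> 0"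
proof -
  obtain K where K: "\<forall>\<^sub>F n in sequentially. moment n (4*j) \<le> K"
    using moment_even_bounded[of "2*j"] by auto
  show ?thesis
  proof (rule Lim_null_comparison)
    from K eventually_ge_at_top[of 16]
    show "\<forall>\<^sub>F n in sequentially.
        norm (cross_moment j n) \<le> K / (2 * sqrt (real n)) + sqrt (real n) / 2 * (10 / real n)"
    proof eventually_elim
      case (elim n)
      have "\<bar>cross_moment j n\<bar> \<le> moment n (4*j) / (2 * sqrt (real n))
          + sqrt (real n) / 2 * perm_mean {1..n} (\<lambda>\<sigma>. (variance_fluct n \<sigma>)\<^sup>2)"
        using elim by (intro abs_cross_moment_le_sqrt) simp
      also have "\<dots> \<le> K / (2 * sqrt (real n)) + sqrt (real n) / 2 * (10 / real n)"
        using elim perm_mean_variance_fluct_sq_le[of n]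
        by (intro add_mono divide_right_mono mult_left_mono) auto
      finally show ?case
        by simp
    qed
    show "(\<lambda>n. K / (2 * sqrt (real n)) + sqrt (real n) / 2 * (10 / real n)) \<longlonglongrightarrow> 0"
      by real_asymp
  qed
qed

lemma tendsto_cancel_factor:
  fixes f g :: "nat \<Rightarrow> real"
  assumes "(\<lambda>n. f n * g n) \<longlonglongrightarrow> l" and g: "g \<longlonglongrightarrow> 1"
  shows "f \<longlonglongrightarrow> l"
proof -
  have "(\<lambda>n. f n * g n / g n) \<longlonglongrightarrow> l / 1"
    using assms by (intro tendsto_divide) auto
  moreover have "\<forall>\<^sub>F n in sequentially. g n > 0"
    using g by (rule order_tendstoD) simp
  then have "\<forall>\<^sub>F n in sequentially. f n * g n / g n = f n"
    by eventually_elim simp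
  ultimately show ?thesis
    by (simp add: tendsto_cong)
qed

lemma gaussian_moment_Suc:
  "real (2*m + 1) / 24 * (fact (2*m) / fact m / 48 ^ m) = (fact (2 * Suc m) / fact (Suc m) / 48 ^ Suc m :: real)"
proof -
  have "(fact (2 * Suc m) :: real) = (real m + 1) * (2 * (2 * real m + 1) * fact (2*m))"
    "(fact (Suc m) :: real) = (real m + 1) * fact m"
    by (simp_all add: fact_Suc algebra_simps)
  then have ratio: "(fact (2 * Suc m) / fact (Suc m) :: real) = 2 * (2 * real m + 1) * fact (2*m) / fact m"
    by (simp only: mult_divide_mult_cancel_left_if) simp
  show ?thesis
    unfolding ratio by (simp add: field_simps)
qed

lemma moment_recursion_defect_tendsto_0:
  "(\<lambda>n. moment n (2 * Suc m) * (1 - real (2*m + 1) / real n) - real (2*m + 1)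
      * (cross_moment m n / 2 + ((real n)\<^sup>2 - 1) / (24 * (real n)\<^sup>2) * moment n (2*m))) \<longlonglongrightarrow> 0"
proof -
  define C where "C = real (2*m + 1) ^ 2 * 2 ^ (2 * Suc m)"
  obtain K where K: "\<forall>\<^sub>F n in sequentially. moment n (2 * Suc m) \<le> K"
    using moment_even_bounded by blast
  show ?thesis
  proof (rule Lim_null_comparison)
    from K eventually_ge_at_top[of 16]
    show "\<forall>\<^sub>F n in sequentially. norm (moment n (2 * Suc m) * (1 - real (2*m + 1) / real n)
        - real (2*m + 1) * (cross_moment m n / 2 + ((real n)\<^sup>2 - 1) / (24 * (real n)\<^sup>2) * moment n (2*m)))
      \<le> 16 / sqrt (real n) * C * (1 + K)"
    proof eventually_elim
      case (elim n)
      then have "16 / sqrt (real n) * C * (1 + moment n (2 * Suc m)) \<le> 16 / sqrt (real n) * C * (1 + K)"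
        by (intro mult_left_mono) (auto simp: C_def)
      with moment_even_recursion[OF \<open>n \<ge> 16\<close>, of m] show ?case
        by (simp add: C_def algebra_simps)
    qed
    show "(\<lambda>n. 16 / sqrt (real n) * C * (1 + K)) \<longlonglongrightarrow> 0"
      by real_asymp
  qed
qed

lemma moment_even_tendsto: "(\<lambda>n. moment n (2*m)) \<longlonglongrightarrow> fact (2*m) / fact m / 48 ^ m"
proof (induction m)
  case 0
  then show ?case
    by (simp add: moment_0)
next
  case (Suc m)
  define k where "k = real (2*m + 1)"
  define q where "q n = ((real n)\<^sup>2 - 1) / (24 * (real n)\<^sup>2)" for n :: nat
  have "q \<longlonglongrightarrow> 1/24"
    unfolding q_def by real_asymp
  with moment_recursion_defect_tendsto_0[of m, folded k_def q_def]
  have "(\<lambda>n. (moment n (2 * Suc m) * (1 - k / real n) - k * (cross_moment m n / 2 + q n * moment n (2*m)))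
      + k * (cross_moment m n / 2 + q n * moment n (2*m)))
    \<longlonglongrightarrow> 0 + k * (0 / 2 + 1/24 * (fact (2*m) / fact m / 48 ^ m))"
    by (intro tendsto_intros cross_moment_tendsto_0 Suc.IH) simp_all
  moreover have "0 + k * (0 / 2 + 1/24 * (fact (2*m) / fact m / 48 ^ m))
      = fact (2 * Suc m) / fact (Suc m) / 48 ^ Suc m"
    unfolding gaussian_moment_Suc[symmetric] k_def by simp
  ultimately have "(\<lambda>n. moment n (2 * Suc m) * (1 - k / real n))
      \<longlonglongrightarrow> fact (2 * Suc m) / fact (Suc m) / 48 ^ Suc m"
    by simp
  moreover have "(\<lambda>n. 1 - k / real n) \<longlonglongrightarrow> 1"
    by real_asymp
  ultimately show ?case
    by (rule tendsto_cancel_factor)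
qed

theorem lemma1:
  fixes m :: nat
  assumes "m \<ge> 1"
  shows "((\<lambda>n. moment n (2 * m)) \<longlonglongrightarrow> fact (2 * m) / fact m / 48 ^ m) \<and>
         (\<lambda>n. moment n (2 * m - 1)) \<longlonglongrightarrow> 0"
proof
  show "(\<lambda>n. moment n (2 * m)) \<longlonglongrightarrow> fact (2 * m) / fact m / 48 ^ m"
    by (rule moment_even_tendsto)
  have odd: "2 * m - 1 = 2 * (m - 1) + 1"
    using assms by simp
  have "\<forall>\<^sub>F n in sequentially. moment n (2 * (m - 1) + 1) = 0"
    using eventually_ge_at_top[of "2::nat"] by eventually_elim (rule moment_odd_eq_0)
  then show "(\<lambda>n. moment n (2 * m - 1)) \<longlonglongrightarrow> 0"
    unfolding odd by (rule tendsto_eventually)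
qed

end
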